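(* Let $(\mathfrak{g},[\cdot,\cdot]_{\mathfrak{g}})$ be a Leibniz algebra over a field $\mathbf{K}$, $(V;\rho^L,\rho^R)$ a representation, and $T:V\to\mathfrak{g}$ a relative Rota-Baxter operator. If two formal deformations $\bar T_t=\sum_{i\ge0}\bar{\mathfrak{T}}_it^i$ and $T_t=\sum_{i\ge0}\mathfrak{T}_it^i$ of $T$ are equivalent, then their infinitesimals $\bar{\mathfrak{T}}_1$ and $\mathfrak{T}_1$ lie in $\mathcal{Z}^1(V,\mathfrak{g})$ and define the same class in $\mathcal{H}^1(V,\mathfrak{g})$.
   Context: A Leibniz algebra is a vector space $\mathfrak{g}$ with bilinear $[\cdot,\cdot]_{\mathfrak{g}}$ satisfying $[x,[y,z]_{\mathfrak{g}}]_{\mathfrak{g}}=[[x,y]_{\mathfrak{g}},z]_{\mathfrak{g}}+[y,[x,z]_{\mathfrak{g}}]_{\mathfrak{g}}$. A representation $(V;\rho^L,\rho^R)$: linear $\rho^L,\rho^R:\mathfrak{g}\to\mathfrak{gl}(V)$ with $\rho^L([x,y]_{\mathfrak{g}})=[\rho^L(x),\rho^L(y)]$, $\rho^R([x,y]_{\mathfrak{g}})=[\rho^L(x),\rho^R(y)]$, $\rho^R(y)\rho^L(x)=-\rho^R(y)\rho^R(x)$. $L_xy=[x,y]_{\mathfrak{g}}$. A relative Rota-Baxter operator is a linear $T:V\to\mathfrak{g}$ with $[Tv_1,Tv_2]_{\mathfrak{g}}=T(\rho^L(Tv_1)v_2+\rho^R(Tv_2)v_1)$. Cohomology of $T$: $C^n(V,\mathfrak{g})=\mathrm{Hom}(\otimes^nV,\mathfrak{g})$,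 $C^0=\mathfrak{g}$, with $\partial_T:C^n\to C^{n+1}$, $(\partial_Tf)(v_1,\dots,v_{n+1})=\sum_{i=1}^n(-1)^{i+1}[Tv_i,f(v_1,\dots,\hat v_i,\dots,v_{n+1})]_{\mathfrak{g}}-\sum_{i=1}^n(-1)^{i+1}T\rho^R(f(v_1,\dots,\hat v_i,\dots,v_{n+1}))v_i+(-1)^{n+1}[f(v_1,\dots,v_n),Tv_{n+1}]_{\mathfrak{g}}+(-1)^nT\rho^L(f(v_1,\dots,v_n))v_{n+1}+\sum_{1\le i<j\le n+1}(-1)^if(v_1,\dots,\hat v_i,\dots,v_{j-1},\rho^L(Tv_i)v_j+\rho^R(Tv_j)v_i,v_{j+1},\dots,v_{n+1})$ (for $x\in C^0$: $(\partial_Tx)(v)=T\rho^L(x)v-[x,Tv]_{\mathfrak{g}}$); $\mathcal{Z}^k=\ker\partial_T\cap C^k$, $\mathcal{B}^k=\partial_T(C^{k-1})$, $\mathcal{H}^k=\mathcal{Z}^k/\mathcal{B}^k$. $\mathfrak{g}[[t]]$, $V[[t]]$ denote formal power series; the bracket and $\rho^L,\rho^R$ extend $\mathbf{K}[[t]]$-bilinearly. A formal deformation of $T$ is $T_t=\sum_{i\ge0}\mathfrak{T}_it^i$ with $\mathfrak{T}_i\in\mathrm{Hom}(V,\mathfrak{g})$, $\mathfrak{T}_0=T$, extended $\mathbf{K}[[t]]$-linearly, such that $[T_t(u),T_t(v)]_{\mathfrak{g}}=T_t(\rho^L(T_t(u))v+\rho^R(T_t(v))u)$ for all $u,v\in V$.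 Its infinitesimal is $\mathfrak{T}_1$. Two formal deformations $\bar T_t$, $T_t$ of $T$ are equivalent if there exist $x\in\mathfrak{g}$, $\phi_i\in\mathfrak{gl}(\mathfrak{g})$, $\varphi_i\in\mathfrak{gl}(V)$ ($i\ge2$) such that $\phi_t=\mathrm{Id}_{\mathfrak{g}}+tL_x+\sum_{i\ge2}\phi_it^i$ and $\varphi_t=\mathrm{Id}_V+t\rho^L(x)+\sum_{i\ge2}\varphi_it^i$ satisfy: $[\phi_t(y),\phi_t(z)]_{\mathfrak{g}}=\phi_t[y,z]_{\mathfrak{g}}$ for $y,z\in\mathfrak{g}$; $\varphi_t\rho^L(y)u=\rho^L(\phi_t(y))\varphi_t(u)$ and $\varphi_t\rho^R(y)u=\rho^R(\phi_t(y))\varphi_t(u)$ for $y\in\mathfrak{g},u\in V$; and $T_t\circ\varphi_t=\phi_t\circ\bar T_t$ as $\mathbf{K}[[t]]$-module maps. *)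

theory Defs
  imports Main "HOL.Vector_Spaces"
begin

text \<open>Vector spaces over a field 'k are modelled by types 'g, 'v with scalar
multiplications sg, sv (locale vector_space). Linear maps: locale predicate linear.\<close>

definition leibniz_algebra ::
  "('k::field \<Rightarrow> 'g::ab_group_add \<Rightarrow> 'g) \<Rightarrow> ('g \<Rightarrow> 'g \<Rightarrow> 'g) \<Rightarrow> bool" where
  "leibniz_algebra sg br \<longleftrightarrow> Vector_Spaces.vector_space sg
     \<and> (\<forall>x. Vector_Spaces.linear sg sg (br x)) \<and> (\<forall>y. Vector_Spaces.linear sg sg (\<lambda>x. br x y))
     \<and> (\<forall>x y z. br x (br y z) = br (br x y) z + br y (br x z))"

definition leibniz_rep ::
  "('k::field \<Rightarrow> 'g::ab_group_add \<Rightarrow> 'g) \<Rightarrow> ('g \<Rightarrow> 'g \<Rightarrow> 'g)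
   \<Rightarrow> ('k \<Rightarrow> 'v::ab_group_add \<Rightarrow> 'v) \<Rightarrow> ('g \<Rightarrow> 'v \<Rightarrow> 'v) \<Rightarrow> ('g \<Rightarrow> 'v \<Rightarrow> 'v) \<Rightarrow> bool" where
  "leibniz_rep sg br sv rL rR \<longleftrightarrow> Vector_Spaces.vector_space sv
     \<and> (\<forall>x. Vector_Spaces.linear sv sv (rL x)) \<and> (\<forall>x. Vector_Spaces.linear sv sv (rR x))
     \<and> (\<forall>v. Vector_Spaces.linear sg sv (\<lambda>x. rL x v)) \<and> (\<forall>v. Vector_Spaces.linear sg sv (\<lambda>x. rR x v))
     \<and> (\<forall>x y v. rL (br x y) v = rL x (rL y v) - rL y (rL x v))
     \<and> (\<forall>x y v. rR (br x y) v = rL x (rR y v) - rR y (rL x v))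
     \<and> (\<forall>x y v. rR y (rL x v) = - rR y (rR x v))"

definition relative_RB ::
  "('k::field \<Rightarrow> 'g::ab_group_add \<Rightarrow> 'g) \<Rightarrow> ('g \<Rightarrow> 'g \<Rightarrow> 'g)
   \<Rightarrow> ('k \<Rightarrow> 'v::ab_group_add \<Rightarrow> 'v) \<Rightarrow> ('g \<Rightarrow> 'v \<Rightarrow> 'v) \<Rightarrow> ('g \<Rightarrow> 'v \<Rightarrow> 'v)
   \<Rightarrow> ('v \<Rightarrow> 'g) \<Rightarrow> bool" where
  "relative_RB sg br sv rL rR T \<longleftrightarrow> Vector_Spaces.linear sv sg T
     \<and> (\<forall>u v. br (T u) (T v) = T (rL (T u) v + rR (T v) u))"

text \<open>Formal power series in t with coefficients in a space are coefficient
sequences nat \<Rightarrow> _. A K[[t]]-bilinear extension of a bilinear map b is the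
Cauchy product of coefficient sequences.\<close>

definition fps_bil :: "('a \<Rightarrow> 'b \<Rightarrow> 'c::comm_monoid_add) \<Rightarrow> (nat \<Rightarrow> 'a) \<Rightarrow> (nat \<Rightarrow> 'b) \<Rightarrow> nat \<Rightarrow> 'c" where
  "fps_bil b A B n = (\<Sum>i\<le>n. b (A i) (B (n - i)))"

definition const_ser :: "'a::zero \<Rightarrow> nat \<Rightarrow> 'a" where
  "const_ser u n = (if n = 0 then u else 0)"

definition ser_apply :: "(nat \<Rightarrow> 'a \<Rightarrow> 'b::comm_monoid_add) \<Rightarrow> (nat \<Rightarrow> 'a) \<Rightarrow> nat \<Rightarrow> 'b" where
  "ser_apply F W = fps_bil (\<lambda>f w. f w) F W"

definition ser_comp :: "(nat \<Rightarrow> 'b \<Rightarrow> 'c::comm_monoid_add) \<Rightarrow> (nat \<Rightarrow> 'a \<Rightarrow> 'b) \<Rightarrow> nat \<Rightarrow> 'a \<Rightarrow> 'c" where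
  "ser_comp A B n = (\<lambda>u. \<Sum>i\<le>n. A i (B (n - i) u))"

definition formal_deformation ::
  "('k::field \<Rightarrow> 'g::ab_group_add \<Rightarrow> 'g) \<Rightarrow> ('g \<Rightarrow> 'g \<Rightarrow> 'g)
   \<Rightarrow> ('k \<Rightarrow> 'v::ab_group_add \<Rightarrow> 'v) \<Rightarrow> ('g \<Rightarrow> 'v \<Rightarrow> 'v) \<Rightarrow> ('g \<Rightarrow> 'v \<Rightarrow> 'v)
   \<Rightarrow> ('v \<Rightarrow> 'g) \<Rightarrow> (nat \<Rightarrow> 'v \<Rightarrow> 'g) \<Rightarrow> bool" where
  "formal_deformation sg br sv rL rR T Tt \<longleftrightarrow>
     (\<forall>i. Vector_Spaces.linear sv sg (Tt i)) \<and> Tt 0 = T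
     \<and> (\<forall>u v. fps_bil br (\<lambda>n. Tt n u) (\<lambda>n. Tt n v)
            = ser_apply Tt (\<lambda>n. fps_bil rL (\<lambda>m. Tt m u) (const_ser v) n
                                  + fps_bil rR (\<lambda>m. Tt m v) (const_ser u) n))"

definition equivalent_deformations ::
  "('k::field \<Rightarrow> 'g::ab_group_add \<Rightarrow> 'g) \<Rightarrow> ('g \<Rightarrow> 'g \<Rightarrow> 'g)
   \<Rightarrow> ('k \<Rightarrow> 'v::ab_group_add \<Rightarrow> 'v) \<Rightarrow> ('g \<Rightarrow> 'v \<Rightarrow> 'v) \<Rightarrow> ('g \<Rightarrow> 'v \<Rightarrow> 'v)
   \<Rightarrow> (nat \<Rightarrow> 'v \<Rightarrow> 'g) \<Rightarrow> (nat \<Rightarrow> 'v \<Rightarrow> 'g) \<Rightarrow> bool" where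
  "equivalent_deformations sg br sv rL rR Tb Tt \<longleftrightarrow>
     (\<exists>x phi psi.
        phi 0 = id \<and> phi 1 = br x \<and> (\<forall>i\<ge>2. Vector_Spaces.linear sg sg (phi i))
      \<and> psi 0 = id \<and> psi 1 = rL x \<and> (\<forall>i\<ge>2. Vector_Spaces.linear sv sv (psi i))
      \<and> (\<forall>y z. fps_bil br (\<lambda>n. phi n y) (\<lambda>n. phi n z) = (\<lambda>n. phi n (br y z)))
      \<and> (\<forall>y u. (\<lambda>n. psi n (rL y u)) = fps_bil rL (\<lambda>n. phi n y) (\<lambda>n. psi n u))
      \<and> (\<forall>y u. (\<lambda>n. psi n (rR y u)) = fps_bil rR (\<lambda>n. phi n y) (\<lambda>n. psi n u))
      \<and> ser_comp Tt psi = ser_comp phi Tb)"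

text \<open>Cochains: C^n(V,g) = multilinear maps V^n \<rightarrow> g, represented as functions on
lists of length n (and 0 on lists of other lengths).\<close>

definition cochain :: "('k::field \<Rightarrow> 'g::ab_group_add \<Rightarrow> 'g) \<Rightarrow> ('k \<Rightarrow> 'v::ab_group_add \<Rightarrow> 'v)
   \<Rightarrow> nat \<Rightarrow> ('v list \<Rightarrow> 'g) set" where
  "cochain sg sv n = {f. (\<forall>vs. length vs \<noteq> n \<longrightarrow> f vs = 0)
       \<and> (\<forall>vs k. length vs = n \<longrightarrow> k < n \<longrightarrow> Vector_Spaces.linear sv sg (\<lambda>w. f (vs[k := w])))}"

definition del_at :: "nat \<Rightarrow> 'a list \<Rightarrow> 'a list" where
  "del_at i vs = take i vs @ drop (Suc i) vs"

text \<open>The coboundary operator d_T : C^n \<rightarrow> C^{n+1} (indices of v_1..v_{n+1} are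
1-based in the paper, 0-based in lists).\<close>
definition coboundary ::
  "('k::field \<Rightarrow> 'g::ab_group_add \<Rightarrow> 'g) \<Rightarrow> ('g \<Rightarrow> 'g \<Rightarrow> 'g)
   \<Rightarrow> ('g \<Rightarrow> 'v::ab_group_add \<Rightarrow> 'v) \<Rightarrow> ('g \<Rightarrow> 'v \<Rightarrow> 'v)
   \<Rightarrow> ('v \<Rightarrow> 'g) \<Rightarrow> nat \<Rightarrow> ('v list \<Rightarrow> 'g) \<Rightarrow> 'v list \<Rightarrow> 'g" where
  "coboundary sg br rL rR T n f vs =
    (if length vs = Suc n then
       (\<Sum>i\<in>{1..n}. sg ((-1) ^ (i + 1)) (br (T (vs ! (i - 1))) (f (del_at (i - 1) vs))))
     - (\<Sum>i\<in>{1..n}. sg ((-1) ^ (i + 1)) (T (rR (f (del_at (i - 1) vs)) (vs ! (i - 1)))))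
     + sg ((-1) ^ (n + 1)) (br (f (take n vs)) (T (vs ! n)))
     + sg ((-1) ^ n) (T (rL (f (take n vs)) (vs ! n)))
     + (\<Sum>(i, j)\<in>{(i, j). 1 \<le> i \<and> i < j \<and> j \<le> Suc n}.
          sg ((-1) ^ i)
            (f (del_at (i - 1) (vs[j - 1 := rL (T (vs ! (i - 1))) (vs ! (j - 1))
                                          + rR (T (vs ! (j - 1))) (vs ! (i - 1))]))))
     else 0)"

definition cocycles where
  "cocycles sg sv br rL rR T k = {f \<in> cochain sg sv k. coboundary sg br rL rR T k f = (\<lambda>_. 0)}"

definition coboundaries where
  "coboundaries sg sv br rL rR T k = coboundary sg br rL rR T k ` cochain sg sv k"

definition same_class where
  "same_class sg sv br rL rR T k f f' \<longleftrightarrow>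
     f \<in> cocycles sg sv br rL rR T k \<and> f' \<in> cocycles sg sv br rL rR T k
     \<and> (\<lambda>vs. f vs - f' vs) \<in> coboundaries sg sv br rL rR T (k - 1)"

definition as_1cochain :: "('v \<Rightarrow> 'g::zero) \<Rightarrow> 'v list \<Rightarrow> 'g" where
  "as_1cochain h vs = (if length vs = 1 then h (hd vs) else 0)"

end

theory Submission
  imports Defs
begin

text \<open>Everything is read off the coefficient of \<open>t\<close>. In the deformation equation of a
  deformation \<open>D\<close> it says \<open>\<partial>\<^sub>T D\<^sub>1 = 0\<close> (the Rota-Baxter identity of \<open>T\<close> is its
  constant coefficient, so it is never used separately). In the equivalence
  \<open>Tt \<circ> \<psi> = \<phi> \<circ> Tb\<close>, where \<open>\<phi> = Id + t L\<^sub>x + \<dots>\<close> and \<open>\<psi> = Id + t \<rho>\<^sup>L(x) + \<dots>\<close>,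
  it says \<open>Tb\<^sub>1 - Tt\<^sub>1 = T \<rho>\<^sup>L(x) - [x, T -] = \<partial>\<^sub>T x\<close>.\<close>

lemma fps_bil_1: "fps_bil b A B 1 = b (A 0) (B 1) + b (A 1) (B 0)"
  by (simp add: fps_bil_def atMost_Suc add.commute)

lemma ser_comp_1: "ser_comp A B 1 u = A 0 (B 1 u) + A 1 (B 0 u)"
  by (simp add: ser_comp_def atMost_Suc add.commute)

lemma ser_apply_1: "ser_apply F W 1 = F 0 (W 1) + F 1 (W 0)"
  unfolding ser_apply_def by (rule fps_bil_1)

definition as_0cochain :: "'g \<Rightarrow> 'v list \<Rightarrow> 'g::zero" where
  "as_0cochain x vs = (if vs = [] then x else 0)"

lemma as_0cochain_in_cochain: "as_0cochain x \<in> cochain sg sv 0"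
  by (simp add: cochain_def as_0cochain_def)

lemma as_1cochain_in_cochain:
  fixes h :: "'v::ab_group_add \<Rightarrow> 'g::ab_group_add"
  assumes "Vector_Spaces.linear sv sg h"
  shows "as_1cochain h \<in> cochain sg sv 1"
  unfolding cochain_def
proof (intro CollectI conjI allI impI)
  fix vs :: "'v list"
  assume "length vs \<noteq> 1"
  then show "as_1cochain h vs = 0"
    by (simp add: as_1cochain_def)
next
  fix vs :: "'v list" and k :: nat
  assume "length vs = 1" "k < 1"
  then obtain v where "vs = [v]" "k = 0"
    by (cases vs) auto
  then show "Vector_Spaces.linear sv sg (\<lambda>w. as_1cochain h (vs[k := w]))"
    using assms by (simp add: as_1cochain_def)
qed

lemma as_1cochain_diff:
  fixes h h' :: "'v \<Rightarrow> 'g::group_add"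
  shows "as_1cochain (\<lambda>u. h u - h' u) = (\<lambda>vs. as_1cochain h vs - as_1cochain h' vs)"
  by (simp add: as_1cochain_def fun_eq_iff)

lemma coboundary_as_0cochain:
  assumes "Vector_Spaces.vector_space sg"
  shows "coboundary sg br rL rR T 0 (as_0cochain x) = as_1cochain (\<lambda>u. T (rL x u) - br x (T u))"
proof
  interpret vector_space sg by fact
  have no_pairs: "{(i, j). 1 \<le> i \<and> i < j \<and> j \<le> Suc 0} = ({} :: (nat \<times> nat) set)"
    by auto
  fix vs
  show "coboundary sg br rL rR T 0 (as_0cochain x) vs = as_1cochain (\<lambda>u. T (rL x u) - br x (T u)) vs"
  proof (cases "length vs = 1")
    case True
    then obtain u where "vs = [u]"
      by (cases vs) auto
    then show ?thesis
      unfolding coboundary_def no_pairs by (simp add: as_0cochain_def as_1cochain_def)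
  qed (simp add: coboundary_def as_1cochain_def)
qed

lemma coboundary_1_Cons2:
  assumes "Vector_Spaces.vector_space sg"
  shows "coboundary sg br rL rR T 1 f [a, b] =
    br (T a) (f [b]) - T (rR (f [b]) a) + br (f [a]) (T b) - T (rL (f [a]) b)
      - f [rL (T a) b + rR (T b) a]"
proof -
  interpret vector_space sg by fact
  have "{(i, j). 1 \<le> i \<and> i < j \<and> j \<le> Suc 1} = {(1 :: nat, 2 :: nat)}"
    by auto
  then show ?thesis
    by (simp add: coboundary_def del_at_def)
qed

lemma formal_deformation_coeff_1:
  assumes rep: "leibniz_rep sg br sv rL rR"
    and def: "formal_deformation sg br sv rL rR T D"
  shows "br (T a) (D 1 b) + br (D 1 a) (T b)
       = T (rL (D 1 a) b + rR (D 1 b) a) + D 1 (rL (T a) b + rR (T b) a)"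
proof -
  interpret vector_space_pair sv sv
    using rep by (simp add: leibniz_rep_def vector_space_pair_def)
  have "\<And>y. rL y 0 = 0" "\<And>y. rR y 0 = 0"
    using rep by (simp_all add: leibniz_rep_def linear_0)
  moreover have "D 0 = T"
    and "fps_bil br (\<lambda>n. D n a) (\<lambda>n. D n b) 1
       = ser_apply D (\<lambda>n. fps_bil rL (\<lambda>m. D m a) (const_ser b) n
                         + fps_bil rR (\<lambda>m. D m b) (const_ser a) n) 1"
    using def by (simp_all add: formal_deformation_def)
  ultimately show ?thesis
    unfolding ser_apply_1 fps_bil_1 by (simp add: const_ser_def fps_bil_def)
qed

lemma infinitesimal_in_cocycles:
  assumes rep: "leibniz_rep sg br sv rL rR"
    and def: "formal_deformation sg br sv rL rR T D"
  shows "as_1cochain (D 1) \<in> cocycles sg sv br rL rR T 1"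
proof -
  have lin_T: "Vector_Spaces.linear sv sg T" and lin_D1: "Vector_Spaces.linear sv sg (D 1)"
    using def by (auto simp: formal_deformation_def)
  interpret T: linear sv sg T
    by (rule lin_T)
  have "coboundary sg br rL rR T 1 (as_1cochain (D 1)) vs = 0" for vs
  proof (cases "length vs = 2")
    case True
    then obtain a b where vs: "vs = [a, b]"
      by (auto simp: numeral_2_eq_2 length_Suc_conv)
    show ?thesis
      unfolding vs coboundary_1_Cons2[OF T.vs2.vector_space_axioms]
      using formal_deformation_coeff_1[OF rep def, of a b]
      by (simp add: as_1cochain_def T.add algebra_simps)
  qed (simp add: coboundary_def)
  then show ?thesis
    using as_1cochain_in_cochain[OF lin_D1] by (auto simp: cocycles_def)
qed

lemma equivalent_deformations_coeff_1:
  assumes "equivalent_deformations sg br sv rL rR Tb Tt"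
    and "Tb 0 = T" and "Tt 0 = T"
  obtains x where "(\<lambda>u. Tb 1 u - Tt 1 u) = (\<lambda>u. T (rL x u) - br x (T u))"
proof -
  obtain x phi psi where "phi 0 = id" "phi 1 = br x" "psi 0 = id" "psi 1 = rL x"
    and "ser_comp Tt psi = ser_comp phi Tb"
    using assms(1) unfolding equivalent_deformations_def by blast
  then have "Tt 0 (rL x u) + Tt 1 u = br x (Tb 0 u) + Tb 1 u" for u
    using ser_comp_1[of Tt psi u] ser_comp_1[of phi Tb u] by simp
  then show ?thesis
    using that[of x] assms(2,3) by (simp add: fun_eq_iff algebra_simps)
qed

theorem theorem3p18:
  fixes sg :: "'k::field \<Rightarrow> 'g::ab_group_add \<Rightarrow> 'g"
    and sv :: "'k \<Rightarrow> 'v::ab_group_add \<Rightarrow> 'v"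
    and br :: "'g \<Rightarrow> 'g \<Rightarrow> 'g"
    and rL rR :: "'g \<Rightarrow> 'v \<Rightarrow> 'v"
    and T :: "'v \<Rightarrow> 'g"
    and Tb Tt :: "nat \<Rightarrow> 'v \<Rightarrow> 'g"
  assumes "leibniz_algebra sg br"
    and "leibniz_rep sg br sv rL rR"
    and "relative_RB sg br sv rL rR T"
    and "formal_deformation sg br sv rL rR T Tb"
    and "formal_deformation sg br sv rL rR T Tt"
    and "equivalent_deformations sg br sv rL rR Tb Tt"
  shows "as_1cochain (Tb 1) \<in> cocycles sg sv br rL rR T 1
       \<and> as_1cochain (Tt 1) \<in> cocycles sg sv br rL rR T 1
       \<and> same_class sg sv br rL rR T 1 (as_1cochain (Tb 1)) (as_1cochain (Tt 1))"
proof -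
  have cocycles: "as_1cochain (Tb 1) \<in> cocycles sg sv br rL rR T 1"
      "as_1cochain (Tt 1) \<in> cocycles sg sv br rL rR T 1"
    using infinitesimal_in_cocycles assms(2,4,5) by blast+
  have "Tb 0 = T" "Tt 0 = T"
    using assms(4,5) by (simp_all add: formal_deformation_def)
  then obtain x where "(\<lambda>u. Tb 1 u - Tt 1 u) = (\<lambda>u. T (rL x u) - br x (T u))"
    using equivalent_deformations_coeff_1 assms(6) by blast
  then have "(\<lambda>vs. as_1cochain (Tb 1) vs - as_1cochain (Tt 1) vs)
           = coboundary sg br rL rR T 0 (as_0cochain x)"
    using assms(1) by (simp add: coboundary_as_0cochain leibniz_algebra_def flip: as_1cochain_diff)
  then have "(\<lambda>vs. as_1cochain (Tb 1) vs - as_1cochain (Tt 1) vs)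
           \<in> coboundaries sg sv br rL rR T (1 - 1)"
    unfolding coboundaries_def by (simp add: imageI as_0cochain_in_cochain)
  with cocycles show ?thesis
    by (simp add: same_class_def)
qed

end
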